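(* Let $\vec{\alpha}=\langle\alpha_s:s\in[\mathbb{N}]^{<\infty}\rangle$ be a sequence of nonstandard hypernatural numbers. Then $([\mathbb{N}]^\infty,\vec{\alpha},\subseteq)$ is an $\vec{\alpha}$-Ramsey space: a set $\mathcal{X}\subseteq[\mathbb{N}]^\infty$ is $\vec{\alpha}$-Ramsey if and only if it has the Baire property with respect to the $\vec{\alpha}$-Ellentuck topology, and $\mathcal{X}$ is $\vec{\alpha}$-Ramsey null if and only if it is meager with respect to the $\vec{\alpha}$-Ellentuck topology.
   Context: Setting (Alpha-Theory of Benci–Di Nasso): ZFC together with a new symbol $\alpha$ satisfying: ($\alpha$1) every sequence $\varphi=\langle\varphi_i:i\in\mathbb{N}\rangle$ has a unique ideal value $\varphi[\alpha]$; ($\alpha$2) if $\varphi[\alpha]=\psi[\alpha]$ and $f\circ\varphi$, $f\circ\psi$ make sense then $(f\circ\varphi)[\alpha]=(f\circ\psi)[\alpha]$; ($\alpha$3) constant real sequences $r$ have ideal value $r$, and $\langle i\rangle$ has ideal value $\alpha\notin\mathbb{N}$; ($\alpha$4) if $\vartheta_i=\{\varphi_i,\psi_i\}$ then $\vartheta[\alpha]=\{\varphi[\alpha],\psi[\alpha]\}$; ($\alpha$5) the constant sequence $\emptyset$ has ideal value $\emptyset$, and for nonempty $\psi_i$, $\psi[\alpha]=\{\vartheta[\alpha]:\vartheta_i\in\psi_i\ \forall i\}$. ${}^*A$ is the ideal value of the constant sequence $A$; ${}^*\mathbb{N}\setminus\mathbb{N}$ is the set of nonstandard hypernatural numbers.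 $[X]^{<\infty}$, $[X]^\infty$: finite, resp. infinite, subsets of $X\subseteq\mathbb{N}$. For finite $s$, $s\sqsubseteq X$ means $s=\{j\in X:j\le i\}$ for some $i$. A tree on $\mathbb{N}$ is a nonempty $T\subseteq[\mathbb{N}]^{<\infty}$ closed under $\sqsubseteq$-initial segments; $[T]=\{X\in[\mathbb{N}]^\infty:$ every finite $s\sqsubseteq X$ is in $T\}$; stem $st(T)$ = $\sqsubseteq$-maximal $s\in T$ comparable with all elements of $T$; $T/s=\{t\in T:s\sqsubseteq t\}$. An $\vec{\alpha}$-tree is a tree $T$ with a stem, $T/st(T)\neq\emptyset$, and $s\cup\{\alpha_s\}\in{}^*T$ for all $s\in T/st(T)$. $\mathcal{X}\subseteq[\mathbb{N}]^\infty$ is $\vec{\alpha}$-Ramsey if for every $\vec{\alpha}$-tree $T$ there is an $\vec{\alpha}$-tree $S\subseteq T$ with $st(S)=st(T)$ and $[S]\subseteq\mathcal{X}$ or $[S]\cap\mathcal{X}=\emptyset$; $\vec{\alpha}$-Ramsey null if always $[S]\cap\mathcal{X}=\emptyset$ can be achieved. The $\vec{\alpha}$-Ellentuck topology on $[\mathbb{N}]^\infty$ is the topology with basis $\{[T]:T\text{ an }\vec{\alpha}\text{-tree}\}$. *)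

theory Defs
  imports "HOL-Analysis.Analysis"
begin

(* Finite and infinite subsets of nat are both represented as  nat set . *)

definition initseg :: "nat set \<Rightarrow> nat set \<Rightarrow> bool" (infix "\<sqsubseteq>" 50) where
  "s \<sqsubseteq> X \<longleftrightarrow> finite s \<and> (\<exists>i. s = {j \<in> X. j \<le> i})"

definition is_tree :: "nat set set \<Rightarrow> bool" where
  "is_tree T \<longleftrightarrow> T \<noteq> {} \<and> (\<forall>t\<in>T. finite t) \<and> (\<forall>t\<in>T. \<forall>s. s \<sqsubseteq> t \<longrightarrow> s \<in> T)"

definition body :: "nat set set \<Rightarrow> nat set set" where
  "body T = {X. infinite X \<and> (\<forall>s. s \<sqsubseteq> X \<longrightarrow> s \<in> T)}"

definition comparable_all :: "nat set set \<Rightarrow> nat set \<Rightarrow> bool" where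
  "comparable_all T s \<longleftrightarrow> s \<in> T \<and> (\<forall>t\<in>T. s \<sqsubseteq> t \<or> t \<sqsubseteq> s)"

definition is_stem :: "nat set set \<Rightarrow> nat set \<Rightarrow> bool" where
  "is_stem T s \<longleftrightarrow> comparable_all T s \<and> (\<forall>s'. comparable_all T s' \<longrightarrow> s' \<sqsubseteq> s)"

definition stem :: "nat set set \<Rightarrow> nat set" where
  "stem T = (THE s. is_stem T s)"

definition has_stem :: "nat set set \<Rightarrow> bool" where
  "has_stem T \<longleftrightarrow> (\<exists>s. is_stem T s)"

definition subtree_above :: "nat set set \<Rightarrow> nat set \<Rightarrow> nat set set" where
  "subtree_above T s = {t \<in> T. s \<sqsubseteq> t}"

text \<open>Model of the Alpha-Theory: the hyperextension is the ultrapower of the standard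
  universe by an ultrafilter U on nat (ideal value of a sequence phi is its class mod U,
  alpha is the class of the identity).\<close>
definition ultrafilter_on_nat :: "nat set set \<Rightarrow> bool" where
  "ultrafilter_on_nat U \<longleftrightarrow> UNIV \<in> U \<and> {} \<notin> U \<and>
     (\<forall>A B. A \<in> U \<and> A \<subseteq> B \<longrightarrow> B \<in> U) \<and>
     (\<forall>A B. A \<in> U \<and> B \<in> U \<longrightarrow> A \<inter> B \<in> U) \<and>
     (\<forall>A. A \<in> U \<or> - A \<in> U)"

text \<open>alpha (the class of the identity sequence) is not in nat, i.e. U is nonprincipal.\<close>
definition alpha_model :: "nat set set \<Rightarrow> bool" where
  "alpha_model U \<longleftrightarrow> ultrafilter_on_nat U \<and> (\<forall>n. {i. i \<noteq> n} \<in> U)"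

text \<open>A hypernatural number is represented by a sequence h :: nat => nat (its ideal value);
  it is nonstandard iff it differs from every standard n on a set in U.\<close>
definition nonstandard_hypernat :: "nat set set \<Rightarrow> (nat \<Rightarrow> nat) \<Rightarrow> bool" where
  "nonstandard_hypernat U h \<longleftrightarrow> (\<forall>n. {i. h i \<noteq> n} \<in> U)"

text \<open>The statement  s \<union> {alpha_s} \<in> *T : with alpha_s the ideal value of a s, the set
  s \<union> {alpha_s} is the ideal value of the sequence i \<mapsto> s \<union> {a s i}, and membership
  in *T holds iff it holds on a U-large set of indices.\<close>
definition in_star :: "nat set set \<Rightarrow> (nat \<Rightarrow> nat set) \<Rightarrow> nat set set \<Rightarrow> bool" where
  "in_star U \<phi> A \<longleftrightarrow> {i. \<phi> i \<in> A} \<in> U"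

definition alpha_tree :: "nat set set \<Rightarrow> (nat set \<Rightarrow> nat \<Rightarrow> nat) \<Rightarrow> nat set set \<Rightarrow> bool" where
  "alpha_tree U a T \<longleftrightarrow> is_tree T \<and> has_stem T \<and> subtree_above T (stem T) \<noteq> {} \<and>
     (\<forall>s \<in> subtree_above T (stem T). in_star U (\<lambda>i. s \<union> {a s i}) T)"

definition alpha_Ramsey :: "nat set set \<Rightarrow> (nat set \<Rightarrow> nat \<Rightarrow> nat) \<Rightarrow> nat set set \<Rightarrow> bool" where
  "alpha_Ramsey U a \<X> \<longleftrightarrow> (\<forall>T. alpha_tree U a T \<longrightarrow>
     (\<exists>S. alpha_tree U a S \<and> S \<subseteq> T \<and> stem S = stem T \<and>
          (body S \<subseteq> \<X> \<or> body S \<inter> \<X> = {})))"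

definition alpha_Ramsey_null :: "nat set set \<Rightarrow> (nat set \<Rightarrow> nat \<Rightarrow> nat) \<Rightarrow> nat set set \<Rightarrow> bool" where
  "alpha_Ramsey_null U a \<X> \<longleftrightarrow> (\<forall>T. alpha_tree U a T \<longrightarrow>
     (\<exists>S. alpha_tree U a S \<and> S \<subseteq> T \<and> stem S = stem T \<and> body S \<inter> \<X> = {}))"

definition alpha_Ellentuck :: "nat set set \<Rightarrow> (nat set \<Rightarrow> nat \<Rightarrow> nat) \<Rightarrow> nat set topology" where
  "alpha_Ellentuck U a = topology_generated_by {body T | T. alpha_tree U a T}"

definition nowhere_dense_in :: "'x topology \<Rightarrow> 'x set \<Rightarrow> bool" where
  "nowhere_dense_in X A \<longleftrightarrow> A \<subseteq> topspace X \<and> X interior_of (X closure_of A) = {}"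

definition meager_in :: "'x topology \<Rightarrow> 'x set \<Rightarrow> bool" where
  "meager_in X A \<longleftrightarrow> A \<subseteq> topspace X \<and>
     (\<exists>N :: nat \<Rightarrow> 'x set. (\<forall>n. nowhere_dense_in X (N n)) \<and> A \<subseteq> (\<Union>n. N n))"

definition Baire_property_in :: "'x topology \<Rightarrow> 'x set \<Rightarrow> bool" where
  "Baire_property_in X A \<longleftrightarrow> A \<subseteq> topspace X \<and>
     (\<exists>G. openin X G \<and> meager_in X ((A - G) \<union> (G - A)))"

end

theory Submission
  imports Defs
begin

text \<open>
  The bodies of \<alpha>-trees form a basis of the \<alpha>-Ellentuck topology, and everything rests on
  one combinatorial fact: open sets are \<alpha>-Ramsey. Call a node of an \<alpha>-tree T good if it is
  the stem of an \<alpha>-subtree of T whose body lies in the open set G. Because U is an ultrafilter,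
  a node is good as soon as U-almost all of its one-point extensions are good (amalgamate the
  witnessing subtrees), so if the stem is bad, pruning T to the nodes with only bad initial
  segments leaves an \<alpha>-tree; its body misses G, since a basic neighbourhood inside G would make
  one of its nodes good.

  Applied to the complement of a closure, this makes nowhere dense sets \<alpha>-Ramsey null; a fusion
  argument shows that countable unions of null sets are null; conversely null sets are nowhere
  dense because bodies of \<alpha>-trees are nonempty and open. Finally a set with the Baire property
  differs from an open, hence \<alpha>-Ramsey, set by a null set, and an \<alpha>-Ramsey set differs from
  the union of the basic open sets it contains by a null set.
\<close>

section \<open>Initial segments\<close>


lemma initseg_iff:
  "s \<sqsubseteq> X \<longleftrightarrow> finite s \<and> s \<subseteq> X \<and> (\<forall>x\<in>X. \<forall>y\<in>s. x \<le> y \<longrightarrow> x \<in> s) \<and> (s = {} \<longrightarrow> 0 \<notin> X)"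
proof
  assume "s \<sqsubseteq> X"
  then obtain i where i: "finite s" "s = {j \<in> X. j \<le> i}"
    unfolding initseg_def by blast
  have "\<forall>x\<in>X. \<forall>y\<in>s. x \<le> y \<longrightarrow> x \<in> s" "s = {} \<longrightarrow> 0 \<notin> X"
    unfolding i(2) by auto
  then show "finite s \<and> s \<subseteq> X \<and> (\<forall>x\<in>X. \<forall>y\<in>s. x \<le> y \<longrightarrow> x \<in> s) \<and> (s = {} \<longrightarrow> 0 \<notin> X)"
    using i by blast
next
  assume H: "finite s \<and> s \<subseteq> X \<and> (\<forall>x\<in>X. \<forall>y\<in>s. x \<le> y \<longrightarrow> x \<in> s) \<and> (s = {} \<longrightarrow> 0 \<notin> X)"
  have "s = {j \<in> X. j \<le> (if s = {} then 0 else Max s)}"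
  proof (cases "s = {}")
    case True
    then show ?thesis using H by (auto simp: le_zero_eq)
  next
    case False
    then have "Max s \<in> s" "\<forall>y\<in>s. y \<le> Max s" using H by simp_all
    then have "s = {j \<in> X. j \<le> Max s}" using H by blast
    then show ?thesis using False by simp
  qed
  then show "s \<sqsubseteq> X"
    using H unfolding initseg_def by blast
qed

lemma initseg_subset: "s \<sqsubseteq> X \<Longrightarrow> s \<subseteq> X"
  by (simp add: initseg_iff)

lemma initseg_finite: "s \<sqsubseteq> X \<Longrightarrow> finite s"
  by (simp add: initseg_iff)

lemma initseg_downward_closed: "s \<sqsubseteq> X \<Longrightarrow> x \<in> X \<Longrightarrow> y \<in> s \<Longrightarrow> x \<le> y \<Longrightarrow> x \<in> s"
  unfolding initseg_iff by blast

lemma initseg_empty: "{} \<sqsubseteq> X \<Longrightarrow> 0 \<notin> X"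
  by (simp add: initseg_iff)

lemma initseg_refl: "finite s \<Longrightarrow> s \<sqsubseteq> s"
  by (simp add: initseg_iff)

lemma initseg_antisym: "s \<sqsubseteq> t \<Longrightarrow> t \<sqsubseteq> s \<Longrightarrow> s = t"
  by (meson initseg_subset subset_antisym)

lemma initseg_trans:
  assumes "s \<sqsubseteq> t" "t \<sqsubseteq> X"
  shows "s \<sqsubseteq> X"
proof -
  have s: "finite s" "s \<subseteq> t" "\<forall>x\<in>t. \<forall>y\<in>s. x \<le> y \<longrightarrow> x \<in> s" "s = {} \<longrightarrow> 0 \<notin> t"
    using assms(1) unfolding initseg_iff by auto
  have t: "t \<subseteq> X" "\<forall>x\<in>X. \<forall>y\<in>t. x \<le> y \<longrightarrow> x \<in> t" "t = {} \<longrightarrow> 0 \<notin> X"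
    using assms(2) unfolding initseg_iff by auto
  have "s = {} \<longrightarrow> 0 \<notin> X"
  proof
    assume "s = {}"
    show "0 \<notin> X"
    proof (cases "t = {}")
      case False
      then obtain y where "y \<in> t" by blast
      then show ?thesis using s(4) t(2) \<open>s = {}\<close> by fastforce
    qed (use t in auto)
  qed
  moreover have "\<forall>x\<in>X. \<forall>y\<in>s. x \<le> y \<longrightarrow> x \<in> s" using s t by blast
  ultimately show ?thesis unfolding initseg_iff using s t by blast
qed

lemma initseg_subset_initseg: "s \<sqsubseteq> X \<Longrightarrow> s \<subseteq> Y \<Longrightarrow> Y \<subseteq> X \<Longrightarrow> s \<sqsubseteq> Y"
  unfolding initseg_iff by blast

lemma initseg_comparable:
  assumes s: "s \<sqsubseteq> X" and t: "t \<sqsubseteq> X"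
  shows "s \<sqsubseteq> t \<or> t \<sqsubseteq> s"
proof (cases "s \<subseteq> t")
  case True
  then show ?thesis using s t initseg_subset_initseg initseg_subset by blast
next
  case False
  then obtain y where y: "y \<in> s" "y \<notin> t" by blast
  have "t \<subseteq> s"
  proof
    fix x assume "x \<in> t"
    show "x \<in> s"
    proof (cases "x \<le> y")
      case True
      then show ?thesis
        using initseg_downward_closed[OF s] \<open>x \<in> t\<close> initseg_subset[OF t] y by blast
    next
      case False
      then have "y \<le> x" by simp
      then have "y \<in> t"
        using initseg_downward_closed[OF t] \<open>x \<in> t\<close> initseg_subset[OF s] y by blast
      then show ?thesis using y by blast
    qed
  qed
  then show ?thesis using s t initseg_subset_initseg initseg_subset by blast
qed

text \<open>Since {} \<sqsubseteq> X holds only when 0 \<notin> X, a number can be appended to the end of a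
  segment only if it is positive.\<close>
definition appendable :: "nat set \<Rightarrow> nat \<Rightarrow> bool" where
  "appendable t n \<longleftrightarrow> 0 < n \<and> (\<forall>j\<in>t. j < n)"

lemma initseg_insert: "finite t \<Longrightarrow> appendable t n \<Longrightarrow> t \<sqsubseteq> insert n t"
  unfolding initseg_iff appendable_def by auto

lemma initseg_insertE:
  assumes q: "q \<sqsubseteq> insert n t" and t: "finite t" "appendable t n"
  shows "q \<sqsubseteq> t \<or> q = insert n t"
proof -
  have "q \<sqsubseteq> t \<or> t \<sqsubseteq> q"
    using initseg_comparable[OF q initseg_insert[OF t]] .
  moreover have "q = t \<or> q = insert n t" if "t \<sqsubseteq> q"
    using initseg_subset[OF that] initseg_subset[OF q] by blast
  ultimately show ?thesis using initseg_refl[OF t(1)] by blast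
qed

lemma initseg_superset:
  assumes "finite A" "A \<subseteq> X"
  obtains q where "q \<sqsubseteq> X" "A \<subseteq> q"
proof
  show "{j \<in> X. j \<le> Max (insert 0 A)} \<sqsubseteq> X"
    unfolding initseg_def by auto
  show "A \<subseteq> {j \<in> X. j \<le> Max (insert 0 A)}"
    using assms by auto
qed

lemma initseg_of_large_card:
  assumes "infinite X" "s \<sqsubseteq> X"
  obtains q where "q \<sqsubseteq> X" "s \<sqsubseteq> q" "n \<le> card q"
proof -
  obtain A where A: "finite A" "card A = n" "A \<subseteq> X"
    using infinite_arbitrarily_large[OF assms(1)] by blast
  have "finite (A \<union> s)" "A \<union> s \<subseteq> X"
    using A assms(2) initseg_finite initseg_subset by auto
  then obtain q where q: "q \<sqsubseteq> X" "A \<union> s \<subseteq> q"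
    by (rule initseg_superset)
  have "s \<sqsubseteq> q \<or> q \<sqsubseteq> s" using initseg_comparable[OF assms(2) q(1)] .
  moreover have "q \<sqsubseteq> s \<Longrightarrow> q = s" using q(2) initseg_subset by blast
  ultimately have "s \<sqsubseteq> q" using initseg_refl[OF initseg_finite[OF assms(2)]] by blast
  moreover have "n \<le> card q"
    using card_mono[OF initseg_finite[OF q(1)], of A] q(2) A(2) by simp
  ultimately show thesis using that q(1) by blast
qed

lemma initseg_common_extension:
  assumes "p \<sqsubseteq> X" "q \<sqsubseteq> X"
  obtains u where "u \<sqsubseteq> X" "p \<sqsubseteq> u" "q \<sqsubseteq> u"
proof (cases "p \<sqsubseteq> q")
  case True
  then show ?thesis using that[OF assms(2)] initseg_refl[OF initseg_finite[OF assms(2)]] by blast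
next
  case False
  then have "q \<sqsubseteq> p" using initseg_comparable[OF assms] by blast
  then show ?thesis using that[OF assms(1)] initseg_refl[OF initseg_finite[OF assms(1)]] by blast
qed

lemma initseg_next:
  assumes "infinite X" "t \<sqsubseteq> X"
  obtains n where "n \<notin> t" "appendable t n" "insert n t \<sqsubseteq> X"
proof -
  have ft: "finite t" using assms initseg_finite by blast
  have "X - t \<noteq> {}" using assms ft finite_subset by auto
  define n where "n = (LEAST x. x \<in> X - t)"
  have nX: "n \<in> X - t" unfolding n_def using \<open>X - t \<noteq> {}\<close> by (meson LeastI_ex ex_in_conv)
  have n_least: "\<And>x. x \<in> X - t \<Longrightarrow> n \<le> x" unfolding n_def by (simp add: Least_le)
  have below: "\<forall>j\<in>t. j < n"
  proof
    fix j assume "j \<in> t"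
    show "j < n"
    proof (rule ccontr)
      assume "\<not> j < n" then have "n \<le> j" by simp
      then have "n \<in> t" using initseg_downward_closed[OF assms(2)] \<open>j \<in> t\<close> nX by blast
      then show False using nX by blast
    qed
  qed
  have "appendable t n"
  proof -
    have "0 < n"
    proof (cases "t = {}")
      case True then have "0 \<notin> X" using assms(2) initseg_empty by blast
      then show ?thesis using nX by (cases n) auto
    next
      case False then show ?thesis using below by fastforce
    qed
    then show ?thesis unfolding appendable_def using below by blast
  qed
  moreover have "insert n t \<sqsubseteq> X"
    unfolding initseg_iff
  proof (intro conjI ballI impI)
    show "finite (insert n t)" using ft by simp
    show "insert n t \<subseteq> X" using nX assms(2) initseg_subset by blast
    fix x y assume xy: "x \<in> X" "y \<in> insert n t" "x \<le> y"
    show "x \<in> insert n t"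
    proof (cases "y \<in> t")
      case True then show ?thesis using xy initseg_downward_closed[OF assms(2)] by blast
    next
      case False then have "y = n" using xy by blast
      show ?thesis
      proof (cases "x \<in> t")
        case False then have "n \<le> x" using n_least xy by blast
        then show ?thesis using \<open>y = n\<close> xy by simp
      qed simp
    qed
  qed simp
  ultimately show ?thesis using that nX by blast
qed

section \<open>Trees\<close>

lemma is_tree_initseg_closed: "is_tree T \<Longrightarrow> t \<in> T \<Longrightarrow> s \<sqsubseteq> t \<Longrightarrow> s \<in> T"
  unfolding is_tree_def by blast

lemma is_tree_finite: "is_tree T \<Longrightarrow> t \<in> T \<Longrightarrow> finite t"
  unfolding is_tree_def by blast

lemma mem_body: "X \<in> body T \<longleftrightarrow> infinite X \<and> (\<forall>s. s \<sqsubseteq> X \<longrightarrow> s \<in> T)"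
  unfolding body_def by simp

lemma body_mono: "S \<subseteq> T \<Longrightarrow> body S \<subseteq> body T"
  unfolding body_def by blast

lemma initseg_of_body:
  assumes X: "X \<in> body T" and u: "finite u" and comparable: "\<And>t. t \<in> T \<Longrightarrow> t \<sqsubseteq> u \<or> u \<sqsubseteq> t"
  shows "u \<sqsubseteq> X"
proof -
  obtain m where m: "m \<in> X" "m \<notin> u"
    using X u unfolding mem_body by (metis finite_subset subsetI)
  obtain q where q: "q \<sqsubseteq> X" "{m} \<subseteq> q"
    using initseg_superset[of "{m}" X] m by auto
  have "q \<sqsubseteq> u \<or> u \<sqsubseteq> q" using comparable X q(1) unfolding mem_body by blast
  moreover have "\<not> q \<sqsubseteq> u" using q m initseg_subset by blast
  ultimately show ?thesis using q initseg_trans by blast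
qed

lemma is_stem_unique: "is_stem T s1 \<Longrightarrow> is_stem T s2 \<Longrightarrow> s1 = s2"
  unfolding is_stem_def by (meson initseg_antisym)

lemma stem_eqI: "is_stem T s \<Longrightarrow> stem T = s"
  unfolding stem_def by (rule the_equality) (simp_all add: is_stem_unique)

lemma is_stem_stem: "has_stem T \<Longrightarrow> is_stem T (stem T)"
  unfolding has_stem_def using stem_eqI by auto

definition through :: "nat set set \<Rightarrow> nat set \<Rightarrow> nat set set" where
  "through T u = {t \<in> T. t \<sqsubseteq> u \<or> u \<sqsubseteq> t}"

lemma through_subset: "through T u \<subseteq> T"
  unfolding through_def by blast

lemma is_tree_through:
  assumes T: "is_tree T" and u: "u \<in> T"
  shows "is_tree (through T u)"
  unfolding is_tree_def
proof (intro conjI ballI allI impI)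
  show "through T u \<noteq> {}"
    using u initseg_refl[OF is_tree_finite[OF T u]] unfolding through_def by blast
  show "finite t" if "t \<in> through T u" for t
    using that is_tree_finite[OF T] unfolding through_def by blast
  fix t s assume t: "t \<in> through T u" and st: "s \<sqsubseteq> t"
  have "s \<sqsubseteq> u \<or> u \<sqsubseteq> s"
  proof (cases "t \<sqsubseteq> u")
    case True then show ?thesis using st initseg_trans by blast
  next
    case False then have "u \<sqsubseteq> t" using t through_def by blast
    then show ?thesis using st initseg_comparable by blast
  qed
  then show "s \<in> through T u"
    using t st is_tree_initseg_closed[OF T] unfolding through_def by blast
qed

lemma body_throughI: "X \<in> body T \<Longrightarrow> u \<sqsubseteq> X \<Longrightarrow> X \<in> body (through T u)"
  unfolding mem_body through_def using initseg_comparable by blast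

lemma finite_subset_UN_mono:
  fixes f :: "nat \<Rightarrow> 'a set"
  assumes "finite A" "A \<subseteq> (\<Union>k. f k)" "mono f"
  shows "\<exists>k. A \<subseteq> f k"
  using assms(1,2)
proof (induction A rule: finite_induct)
  case (insert x A)
  then obtain k j where "A \<subseteq> f k" "x \<in> f j" by blast
  then have "insert x A \<subseteq> f (max j k)"
    using monoD[OF assms(3), of k "max j k"] monoD[OF assms(3), of j "max j k"] by auto
  then show ?case by blast
qed simp

section \<open>\<alpha>-trees\<close>

locale alpha_sequence =
  fixes U :: "nat set set" and a :: "nat set \<Rightarrow> nat \<Rightarrow> nat"
  assumes alpha_model: "alpha_model U"
    and nonstandard: "\<And>s. finite s \<Longrightarrow> nonstandard_hypernat U (a s)"
begin

text \<open>In the ultrapower model, the paper's s \<union> {\<alpha>_s} \<in> *T says that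
  insert (a s i) s \<in> T holds for U-almost all i, i.e. eventually in this filter.\<close>
definition alpha_filter :: "nat filter" where
  "alpha_filter = Abs_filter (\<lambda>P. {i. P i} \<in> U)"

lemma eventually_alpha_filter: "eventually P alpha_filter \<longleftrightarrow> {i. P i} \<in> U"
proof -
  have U: "UNIV \<in> U" "\<And>A B. A \<in> U \<Longrightarrow> A \<subseteq> B \<Longrightarrow> B \<in> U" "\<And>A B. A \<in> U \<Longrightarrow> B \<in> U \<Longrightarrow> A \<inter> B \<in> U"
    using alpha_model unfolding alpha_model_def ultrafilter_on_nat_def by blast+
  have "is_filter (\<lambda>P. {i. P i} \<in> U)"
  proof
    show "{i. True} \<in> U" using U(1) by simp
    show "{i. P i \<and> Q i} \<in> U" if "{i. P i} \<in> U" "{i. Q i} \<in> U" for P Q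
      using U(3)[OF that] by (simp add: Collect_conj_eq)
    show "{i. Q i} \<in> U" if "\<forall>i. P i \<longrightarrow> Q i" "{i. P i} \<in> U" for P Q
      using U(2)[OF that(2)] that(1) by blast
  qed
  then show ?thesis
    unfolding alpha_filter_def by (simp add: eventually_Abs_filter)
qed

lemma alpha_filter_neq_bot: "alpha_filter \<noteq> bot"
  using alpha_model unfolding trivial_limit_def eventually_alpha_filter alpha_model_def ultrafilter_on_nat_def
  by simp

lemma eventually_alpha_filter_not:
  assumes "\<not> eventually P alpha_filter"
  shows "\<forall>\<^sub>F i in alpha_filter. \<not> P i"
proof -
  have "- {i. P i} \<in> U"
    using assms alpha_model unfolding eventually_alpha_filter alpha_model_def ultrafilter_on_nat_def
    by blast
  then show ?thesis
    by (simp add: eventually_alpha_filter Collect_neg_eq)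
qed

lemma eventually_avoids:
  assumes "finite s" "finite F"
  shows "\<forall>\<^sub>F i in alpha_filter. a s i \<notin> F"
proof -
  have "\<forall>n\<in>F. \<forall>\<^sub>F i in alpha_filter. a s i \<noteq> n"
    using nonstandard[OF assms(1)] unfolding nonstandard_hypernat_def eventually_alpha_filter by blast
  then have "\<forall>\<^sub>F i in alpha_filter. \<forall>n\<in>F. a s i \<noteq> n"
    by (rule eventually_ball_finite[OF assms(2)])
  then show ?thesis
    by (rule eventually_mono) blast
qed

lemma eventually_appendable:
  assumes t: "finite t"
  shows "\<forall>\<^sub>F i in alpha_filter. appendable t (a t i)"
  using eventually_avoids[OF t, of "{..Max (insert 0 t)}"]
proof (rule eventually_mono)
  fix i assume "a t i \<notin> {..Max (insert 0 t)}"
  then have "Max (insert 0 t) < a t i" by simp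
  moreover have "\<forall>j\<in>insert 0 t. j \<le> Max (insert 0 t)" using t by simp
  ultimately show "appendable t (a t i)"
    unfolding appendable_def by fastforce
qed simp

lemma obtain_successor:
  assumes "finite t" "\<forall>\<^sub>F i in alpha_filter. P (a t i)" "finite F"
  obtains n where "P n" "appendable t n" "n \<notin> F"
proof -
  have "\<forall>\<^sub>F i in alpha_filter. P (a t i) \<and> appendable t (a t i) \<and> a t i \<notin> F"
    using assms(2) eventually_appendable[OF assms(1)] eventually_avoids[OF assms(1,3)]
    by (intro eventually_conj)
  then show thesis
    using that eventually_happens'[OF alpha_filter_neq_bot] by blast
qed

lemma alpha_tree_iff:
  "alpha_tree U a T \<longleftrightarrow> is_tree T \<and> has_stem T \<and>
     (\<forall>t\<in>T. stem T \<sqsubseteq> t \<longrightarrow> (\<forall>\<^sub>F i in alpha_filter. insert (a t i) t \<in> T))"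
proof -
  have "subtree_above T (stem T) \<noteq> {}" if "has_stem T"
    using is_stem_stem[OF that] initseg_refl[of "stem T"] unfolding is_stem_def comparable_all_def subtree_above_def
    by blast
  then show ?thesis
    unfolding alpha_tree_def subtree_above_def in_star_def eventually_alpha_filter by auto
qed

lemma alpha_tree_is_tree: "alpha_tree U a T \<Longrightarrow> is_tree T"
  unfolding alpha_tree_def by blast

lemma alpha_tree_stem:
  assumes "alpha_tree U a T"
  shows "stem T \<in> T" "\<And>t. t \<in> T \<Longrightarrow> stem T \<sqsubseteq> t \<or> t \<sqsubseteq> stem T"
  using is_stem_stem assms unfolding alpha_tree_iff is_stem_def comparable_all_def by blast+

lemma alpha_tree_successors:
  "alpha_tree U a T \<Longrightarrow> t \<in> T \<Longrightarrow> stem T \<sqsubseteq> t \<Longrightarrow> \<forall>\<^sub>F i in alpha_filter. insert (a t i) t \<in> T"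
  unfolding alpha_tree_iff by blast

lemma alpha_treeI:
  assumes T: "is_tree T" and s: "s \<in> T" and comparable: "\<And>t. t \<in> T \<Longrightarrow> s \<sqsubseteq> t \<or> t \<sqsubseteq> s"
    and successors: "\<And>t. t \<in> T \<Longrightarrow> s \<sqsubseteq> t \<Longrightarrow> \<forall>\<^sub>F i in alpha_filter. insert (a t i) t \<in> T"
  shows "alpha_tree U a T" "stem T = s"
proof -
  have fs: "finite s" using T s is_tree_finite by blast
  have "s' \<sqsubseteq> s" if s': "comparable_all T s'" for s'
  proof (rule ccontr)
    assume "\<not> s' \<sqsubseteq> s"
    then have ss': "s \<sqsubseteq> s'"
      using s' s unfolding comparable_all_def by blast
    have s'T: "s' \<in> T" using s' unfolding comparable_all_def by blast
    obtain n where n: "insert n s \<in> T" "n \<notin> s'"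
      using obtain_successor[OF fs successors[OF s initseg_refl[OF fs]] is_tree_finite[OF T s'T]] .
    have "s' \<sqsubseteq> insert n s \<or> insert n s \<sqsubseteq> s'"
      using s' n(1) unfolding comparable_all_def by blast
    then have "s' \<subseteq> insert n s"
      using n(2) initseg_subset by blast
    then have "s' = s"
      using n(2) ss' initseg_subset by blast
    then show False using \<open>\<not> s' \<sqsubseteq> s\<close> initseg_refl[OF fs] by blast
  qed
  then have "is_stem T s"
    unfolding is_stem_def comparable_all_def using s comparable by blast
  then show "stem T = s" by (rule stem_eqI)
  then show "alpha_tree U a T"
    unfolding alpha_tree_iff has_stem_def using T successors \<open>is_stem T s\<close> by blast
qed

lemma alpha_tree_through:
  assumes T: "is_tree T" and u: "u \<in> T"
    and successors: "\<And>t. t \<in> T \<Longrightarrow> u \<sqsubseteq> t \<Longrightarrow> \<forall>\<^sub>F i in alpha_filter. insert (a t i) t \<in> T"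
  shows "alpha_tree U a (through T u)" "stem (through T u) = u"
proof -
  have "\<forall>\<^sub>F i in alpha_filter. insert (a t i) t \<in> through T u"
    if t: "t \<in> through T u" "u \<sqsubseteq> t" for t
  proof -
    have tT: "t \<in> T" and ft: "finite t"
      using t T is_tree_finite unfolding through_def by auto
    have "\<forall>\<^sub>F i in alpha_filter. insert (a t i) t \<in> T \<and> appendable t (a t i)"
      using successors[OF tT t(2)] eventually_appendable[OF ft] by (rule eventually_conj)
    then show ?thesis
    proof (rule eventually_mono)
      fix i assume i: "insert (a t i) t \<in> T \<and> appendable t (a t i)"
      then have "u \<sqsubseteq> insert (a t i) t"
        using initseg_trans[OF t(2) initseg_insert[OF ft]] by blast
      then show "insert (a t i) t \<in> through T u"
        using i unfolding through_def by blast
    qed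
  qed
  moreover have "u \<in> through T u"
    using u initseg_refl[OF is_tree_finite[OF T u]] unfolding through_def by blast
  moreover have "t \<sqsubseteq> u \<or> u \<sqsubseteq> t" if "t \<in> through T u" for t
    using that unfolding through_def by blast
  ultimately show "alpha_tree U a (through T u)" "stem (through T u) = u"
    using alpha_treeI[OF is_tree_through[OF T u]] by blast+
qed

lemma alpha_tree_Int_through:
  assumes T1: "alpha_tree U a T1" and T2: "alpha_tree U a T2" and u: "u \<in> T1" "u \<in> T2"
    and stems: "stem T1 \<sqsubseteq> u" "stem T2 \<sqsubseteq> u"
  shows "alpha_tree U a (through (T1 \<inter> T2) u)" "stem (through (T1 \<inter> T2) u) = u"
proof -
  have "is_tree (T1 \<inter> T2)"
    using alpha_tree_is_tree[OF T1] alpha_tree_is_tree[OF T2] u unfolding is_tree_def by blast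
  moreover have "\<forall>\<^sub>F i in alpha_filter. insert (a t i) t \<in> T1 \<inter> T2"
    if t: "t \<in> T1 \<inter> T2" "u \<sqsubseteq> t" for t
  proof -
    have "\<forall>\<^sub>F i in alpha_filter. insert (a t i) t \<in> T1 \<and> insert (a t i) t \<in> T2"
      using t initseg_trans[OF stems(1) t(2)] initseg_trans[OF stems(2) t(2)]
      by (intro eventually_conj alpha_tree_successors[OF T1] alpha_tree_successors[OF T2]) auto
    then show ?thesis by simp
  qed
  ultimately show "alpha_tree U a (through (T1 \<inter> T2) u)" "stem (through (T1 \<inter> T2) u) = u"
    using alpha_tree_through[of "T1 \<inter> T2" u] u by blast+
qed

lemma stem_initseg_body:
  assumes T: "alpha_tree U a T" and X: "X \<in> body T"
  shows "stem T \<sqsubseteq> X"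
proof (rule initseg_of_body[OF X])
  show "finite (stem T)"
    using is_tree_finite[OF alpha_tree_is_tree[OF T] alpha_tree_stem(1)[OF T]] .
  show "t \<sqsubseteq> stem T \<or> stem T \<sqsubseteq> t" if "t \<in> T" for t
    using alpha_tree_stem(2)[OF T that] by blast
qed

lemma body_nonempty:
  assumes T: "alpha_tree U a T"
  shows "body T \<noteq> {}"
proof -
  have T_tree: "is_tree T" using alpha_tree_is_tree[OF T] .
  define next_node where "next_node = (\<lambda>t. SOME n. insert n t \<in> T \<and> appendable t n)"
  have next_node: "insert (next_node t) t \<in> T \<and> appendable t (next_node t)"
    if t: "t \<in> T" "stem T \<sqsubseteq> t" for t
  proof -
    obtain n where "insert n t \<in> T" "appendable t n"
      using obtain_successor[OF is_tree_finite[OF T_tree t(1)] alpha_tree_successors[OF T t] finite.emptyI] .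
    then have "insert n t \<in> T \<and> appendable t n" ..
    then show ?thesis unfolding next_node_def by (rule someI)
  qed
  define f where "f = rec_nat (stem T) (\<lambda>_ t. insert (next_node t) t)"
  have f_Suc: "f (Suc k) = insert (next_node (f k)) (f k)" for k
    unfolding f_def by simp
  have f: "f k \<in> T \<and> stem T \<sqsubseteq> f k \<and> appendable (f k) (next_node (f k))" for k
  proof (induction k)
    case 0
    have "stem T \<in> T" using alpha_tree_stem(1)[OF T] .
    moreover have "stem T \<sqsubseteq> stem T" using initseg_refl is_tree_finite[OF T_tree] calculation by blast
    ultimately show ?case using next_node unfolding f_def by simp
  next
    case (Suc k)
    have "f k \<sqsubseteq> f (Suc k)"
      using Suc f_Suc initseg_insert is_tree_finite[OF T_tree] by simp
    then have "stem T \<sqsubseteq> f (Suc k)"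
      using Suc initseg_trans by blast
    then show ?case
      using Suc next_node f_Suc by simp
  qed
  have f_mono: "mono f"
    unfolding mono_iff_le_Suc f_Suc by blast
  define X where "X = (\<Union>k. f k)"
  have "strict_mono (\<lambda>k. next_node (f k))"
  proof (rule strict_monoI_Suc)
    fix k
    have "next_node (f k) \<in> f (Suc k)" using f_Suc by simp
    then show "next_node (f k) < next_node (f (Suc k))"
      using f[of "Suc k"] unfolding appendable_def by blast
  qed
  then have "infinite (range (\<lambda>k. next_node (f k)))"
    using range_inj_infinite strict_mono_imp_inj_on by blast
  moreover have "range (\<lambda>k. next_node (f k)) \<subseteq> X"
    unfolding X_def using f_Suc by blast
  ultimately have "infinite X"
    using finite_subset by blast
  moreover have "s \<in> T" if s: "s \<sqsubseteq> X" for s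
  proof -
    have "s \<subseteq> (\<Union>k. f k)" using initseg_subset[OF s] unfolding X_def .
    then obtain k where "s \<subseteq> f k"
      using finite_subset_UN_mono[OF initseg_finite[OF s] _ f_mono] by blast
    then have "s \<sqsubseteq> f k"
      using initseg_subset_initseg[OF s] unfolding X_def by blast
    then show "s \<in> T"
      using is_tree_initseg_closed[OF T_tree] f by blast
  qed
  ultimately have "X \<in> body T"
    unfolding mem_body by blast
  then show ?thesis by blast
qed

section \<open>The \<alpha>-Ellentuck topology\<close>

abbreviation ellentuck :: "nat set topology" where
  "ellentuck \<equiv> alpha_Ellentuck U a"

lemma openin_body: "alpha_tree U a T \<Longrightarrow> openin ellentuck (body T)"
  unfolding alpha_Ellentuck_def by (rule topology_generated_by_Basis) blast

lemma topspace_ellentuck: "topspace ellentuck = {X. infinite X}"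
proof
  show "topspace ellentuck \<subseteq> {X. infinite X}"
    unfolding alpha_Ellentuck_def body_def by auto
  show "{X. infinite X} \<subseteq> topspace ellentuck"
  proof
    fix X :: "nat set" assume "X \<in> {X. infinite X}"
    then have X: "X \<in> body {t. finite t}"
      unfolding mem_body using initseg_finite by blast
    define u where "u = {j \<in> X. j \<le> 0}"
    have "finite u" unfolding u_def by simp
    then have u: "u \<sqsubseteq> X" unfolding initseg_def u_def by blast
    have "is_tree {t. finite t}"
      unfolding is_tree_def using initseg_finite by blast
    then have "alpha_tree U a (through {t. finite t} u)"
      using alpha_tree_through[of "{t. finite t}" u] initseg_finite[OF u] by simp
    moreover have "X \<in> body (through {t. finite t} u)"
      using body_throughI[OF X u] .
    ultimately show "X \<in> topspace ellentuck"
      unfolding alpha_Ellentuck_def by auto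
  qed
qed

lemma body_Int_body:
  assumes T1: "alpha_tree U a T1" and T2: "alpha_tree U a T2" and X: "X \<in> body T1" "X \<in> body T2"
  obtains T where "alpha_tree U a T" "X \<in> body T" "body T \<subseteq> body T1 \<inter> body T2"
proof -
  obtain u where u: "u \<sqsubseteq> X" "stem T1 \<sqsubseteq> u" "stem T2 \<sqsubseteq> u"
    using initseg_common_extension[OF stem_initseg_body[OF T1 X(1)] stem_initseg_body[OF T2 X(2)]] .
  have "u \<in> T1" "u \<in> T2" using u(1) X unfolding mem_body by blast+
  note T = alpha_tree_Int_through[OF T1 T2 this u(2,3)]
  have "X \<in> body (through (T1 \<inter> T2) u)"
    using body_throughI[OF _ u(1)] X unfolding mem_body by blast
  moreover have "body (through (T1 \<inter> T2) u) \<subseteq> body T1 \<inter> body T2"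
  proof -
    have "through (T1 \<inter> T2) u \<subseteq> T1" "through (T1 \<inter> T2) u \<subseteq> T2"
      using through_subset by blast+
    then show ?thesis using body_mono by blast
  qed
  ultimately show thesis using that T(1) by blast
qed

lemma openin_ellentuck_basis:
  assumes "openin ellentuck G" "X \<in> G"
  obtains T where "alpha_tree U a T" "X \<in> body T" "body T \<subseteq> G"
proof -
  have "generate_topology_on {body T | T. alpha_tree U a T} G"
    using assms(1) unfolding alpha_Ellentuck_def by (rule openin_topology_generated_by)
  then have "\<exists>T. alpha_tree U a T \<and> X \<in> body T \<and> body T \<subseteq> G"
    using assms(2)
  proof (induction arbitrary: X)
    case (Int G1 G2)
    then obtain T1 T2 where T1: "alpha_tree U a T1" "X \<in> body T1" "body T1 \<subseteq> G1"
      and T2: "alpha_tree U a T2" "X \<in> body T2" "body T2 \<subseteq> G2" by blast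
    obtain T where "alpha_tree U a T" "X \<in> body T" "body T \<subseteq> body T1 \<inter> body T2"
      using body_Int_body[OF T1(1) T2(1) T1(2) T2(2)] .
    then show ?case using T1(3) T2(3) by blast
  next
    case (UN K)
    then show ?case by blast
  qed auto
  then show thesis using that by blast
qed

section \<open>Open sets are \<alpha>-Ramsey\<close>

lemma successor_stem_comparable:
  assumes R: "alpha_tree U a R" "stem R = insert n t" and t: "finite t" "appendable t n" and r: "r \<in> R"
  shows "r \<sqsubseteq> t \<or> insert n t \<sqsubseteq> r"
proof -
  have "insert n t \<sqsubseteq> r \<or> r \<sqsubseteq> insert n t"
    using alpha_tree_stem(2)[OF R(1) r] R(2) by simp
  moreover have "insert n t \<sqsubseteq> insert n t"
    using initseg_refl t(1) by simp
  ultimately show ?thesis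
    using initseg_insertE[OF _ t] by blast
qed

lemma alpha_tree_UN_successors:
  assumes t: "finite t" and N: "\<forall>\<^sub>F i in alpha_filter. a t i \<in> N"
    and R: "\<And>n. n \<in> N \<Longrightarrow> appendable t n \<and> alpha_tree U a (R n) \<and> stem (R n) = insert n t"
  shows "alpha_tree U a (\<Union>n\<in>N. R n)" "stem (\<Union>n\<in>N. R n) = t"
proof -
  have stem_mem: "insert n t \<in> R n" if "n \<in> N" for n
    using alpha_tree_stem(1)[of "R n"] R[OF that] by simp
  have t_below: "t \<sqsubseteq> insert n t" if "n \<in> N" for n
    using R[OF that] initseg_insert[OF t] by blast
  have R_tree: "is_tree (R n)" if "n \<in> N" for n
    using R[OF that] alpha_tree_is_tree by blast
  have comparable: "r \<sqsubseteq> t \<or> insert n t \<sqsubseteq> r" if "n \<in> N" "r \<in> R n" for n r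
    using successor_stem_comparable[OF _ _ t] R[OF that(1)] that(2) by blast
  obtain n0 where "n0 \<in> N"
    using eventually_happens'[OF alpha_filter_neq_bot N] by blast
  then have t_mem: "t \<in> (\<Union>n\<in>N. R n)"
    using is_tree_initseg_closed[OF R_tree stem_mem t_below] by blast
  moreover have "is_tree (\<Union>n\<in>N. R n)"
    using t_mem R_tree unfolding is_tree_def by blast
  moreover have "t \<sqsubseteq> r \<or> r \<sqsubseteq> t" if "r \<in> (\<Union>n\<in>N. R n)" for r
    using that comparable t_below initseg_trans by blast
  moreover have "\<forall>\<^sub>F i in alpha_filter. insert (a r i) r \<in> (\<Union>n\<in>N. R n)"
    if r: "r \<in> (\<Union>n\<in>N. R n)" "t \<sqsubseteq> r" for r
  proof (cases "r = t")
    case True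
    show ?thesis
      using N by (rule eventually_mono) (use True stem_mem in blast)
  next
    case False
    then obtain n where n: "n \<in> N" "r \<in> R n" using r by blast
    have "\<not> r \<sqsubseteq> t" using False r(2) initseg_antisym by blast
    then have "stem (R n) \<sqsubseteq> r"
      using comparable[OF n] R[OF n(1)] by simp
    then have "\<forall>\<^sub>F i in alpha_filter. insert (a r i) r \<in> R n"
      using alpha_tree_successors R[OF n(1)] n(2) by blast
    then show ?thesis
      by (rule eventually_mono) (use n(1) in blast)
  qed
  ultimately show "alpha_tree U a (\<Union>n\<in>N. R n)" "stem (\<Union>n\<in>N. R n) = t"
    using alpha_treeI[of "\<Union>n\<in>N. R n" t] by blast+
qed

lemma body_UN_successors:
  assumes t: "finite t" and N: "\<forall>\<^sub>F i in alpha_filter. a t i \<in> N"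
    and R: "\<And>n. n \<in> N \<Longrightarrow> appendable t n \<and> alpha_tree U a (R n) \<and> stem (R n) = insert n t"
  shows "body (\<Union>n\<in>N. R n) \<subseteq> (\<Union>n\<in>N. body (R n))"
proof
  fix X assume X: "X \<in> body (\<Union>n\<in>N. R n)"
  have "infinite X" using X unfolding mem_body by blast
  moreover have "t \<sqsubseteq> X"
    using stem_initseg_body[OF alpha_tree_UN_successors(1)[OF assms] X]
      alpha_tree_UN_successors(2)[OF assms] by simp
  ultimately obtain m where m: "m \<notin> t" "appendable t m" "insert m t \<sqsubseteq> X"
    by (rule initseg_next)
  have only_m: "j = m" if j: "j \<in> N" "r \<in> R j" "insert m t \<sqsubseteq> r" for j r
  proof -
    have "j \<notin> t" using R[OF j(1)] unfolding appendable_def by blast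
    have "\<not> r \<sqsubseteq> t"
      using initseg_subset[of r t] initseg_subset[OF j(3)] m(1) by blast
    then have "insert j t \<sqsubseteq> r"
      using successor_stem_comparable[OF _ _ t] R[OF j(1)] j(2) by blast
    then have "insert j t \<sqsubseteq> insert m t \<or> insert m t \<sqsubseteq> insert j t"
      using initseg_comparable[OF _ j(3)] by blast
    then have "insert j t \<subseteq> insert m t \<or> insert m t \<subseteq> insert j t"
      using initseg_subset[of "insert j t"] initseg_subset[of "insert m t"] by blast
    then show "j = m" using m(1) \<open>j \<notin> t\<close> by blast
  qed
  obtain n where n: "n \<in> N" "insert m t \<in> R n"
    using X m(3) unfolding mem_body by blast
  moreover have "insert m t \<sqsubseteq> insert m t"
    using initseg_refl initseg_finite[OF m(3)] by blast
  ultimately have "n = m"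
    using only_m by blast
  with n have mN: "m \<in> N" and mR: "insert m t \<in> R m"
    by simp_all
  have R_m_tree: "is_tree (R m)"
    using R[OF mN] alpha_tree_is_tree by blast
  have "q \<in> R m" if q: "q \<sqsubseteq> X" for q
  proof (cases "q \<sqsubseteq> insert m t")
    case True
    then show ?thesis
      using is_tree_initseg_closed[OF R_m_tree mR] by blast
  next
    case False
    then have "insert m t \<sqsubseteq> q" using initseg_comparable[OF q m(3)] by blast
    moreover obtain j where j: "j \<in> N" "q \<in> R j" using X q unfolding mem_body by blast
    ultimately have "j = m" using only_m by blast
    with j show ?thesis by simp
  qed
  then have "X \<in> body (R m)"
    using \<open>infinite X\<close> unfolding mem_body by blast
  then show "X \<in> (\<Union>n\<in>N. body (R n))"
    using mN by blast
qed

lemma alpha_tree_amalgamation: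
  assumes t: "finite t"
    and successors: "\<forall>\<^sub>F i in alpha_filter.
      \<exists>R. alpha_tree U a R \<and> R \<subseteq> T \<and> stem R = insert (a t i) t \<and> body R \<subseteq> \<X>"
  shows "\<exists>R. alpha_tree U a R \<and> R \<subseteq> T \<and> stem R = t \<and> body R \<subseteq> \<X>"
proof -
  define good where "good = (\<lambda>u R. alpha_tree U a R \<and> R \<subseteq> T \<and> stem R = u \<and> body R \<subseteq> \<X>)"
  define N where "N = {n. appendable t n \<and> (\<exists>R. good (insert n t) R)}"
  define R where "R = (\<lambda>n. SOME R. good (insert n t) R)"
  have R: "appendable t n \<and> good (insert n t) (R n)" if "n \<in> N" for n
  proof -
    have "\<exists>R. good (insert n t) R" using that unfolding N_def by blast
    then have "good (insert n t) (R n)" unfolding R_def by (rule someI_ex)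
    then show ?thesis using that unfolding N_def by blast
  qed
  have N: "\<forall>\<^sub>F i in alpha_filter. a t i \<in> N"
    using eventually_conj[OF successors eventually_appendable[OF t]]
    by (rule eventually_mono) (simp add: N_def good_def)
  have R': "appendable t n \<and> alpha_tree U a (R n) \<and> stem (R n) = insert n t" if "n \<in> N" for n
    using R[OF that] unfolding good_def by blast
  have "good t (\<Union>n\<in>N. R n)"
    unfolding good_def
  proof (intro conjI)
    show "alpha_tree U a (\<Union>n\<in>N. R n)" "stem (\<Union>n\<in>N. R n) = t"
      using alpha_tree_UN_successors[OF t N R'] by blast+
    show "(\<Union>n\<in>N. R n) \<subseteq> T"
      using R unfolding good_def by blast
    have "(\<Union>n\<in>N. body (R n)) \<subseteq> \<X>"
      using R unfolding good_def by blast
    then show "body (\<Union>n\<in>N. R n) \<subseteq> \<X>"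
      using body_UN_successors[OF t N R'] by blast
  qed
  then show ?thesis unfolding good_def by blast
qed

definition prune :: "nat set set \<Rightarrow> (nat set \<Rightarrow> bool) \<Rightarrow> nat set set" where
  "prune T P = {r \<in> T. r \<sqsubseteq> stem T \<or> (stem T \<sqsubseteq> r \<and> (\<forall>q. stem T \<sqsubseteq> q \<longrightarrow> q \<sqsubseteq> r \<longrightarrow> P q))}"

lemma prune_subset: "prune T P \<subseteq> T"
  unfolding prune_def by blast

lemma prune_above:
  assumes "P (stem T)" "r \<in> prune T P" "stem T \<sqsubseteq> q" "q \<sqsubseteq> r"
  shows "P q"
proof (cases "r \<sqsubseteq> stem T")
  case True
  then have "q = stem T" using assms(3,4) initseg_trans initseg_antisym by blast
  then show ?thesis using assms(1) by simp
qed (use assms in \<open>auto simp: prune_def\<close>)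

lemma is_tree_prune:
  assumes T: "is_tree T" and s: "stem T \<in> T"
  shows "is_tree (prune T P)"
  unfolding is_tree_def
proof (intro conjI ballI allI impI)
  show "prune T P \<noteq> {}"
    using s initseg_refl[OF is_tree_finite[OF T s]] unfolding prune_def by blast
  show "finite r" if "r \<in> prune T P" for r
    using that is_tree_finite[OF T] unfolding prune_def by blast
  fix r r' assume r: "r \<in> prune T P" and r'r: "r' \<sqsubseteq> r"
  have r'T: "r' \<in> T" using r is_tree_initseg_closed[OF T _ r'r] unfolding prune_def by blast
  show "r' \<in> prune T P"
  proof (cases "r \<sqsubseteq> stem T")
    case True
    then show ?thesis unfolding prune_def using r'T initseg_trans[OF r'r] by blast
  next
    case False
    then have "stem T \<sqsubseteq> r" "\<forall>q. stem T \<sqsubseteq> q \<longrightarrow> q \<sqsubseteq> r \<longrightarrow> P q"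
      using r unfolding prune_def by blast+
    moreover have "r' \<sqsubseteq> stem T \<or> stem T \<sqsubseteq> r'"
      using initseg_comparable[OF r'r] calculation(1) by blast
    ultimately show ?thesis
      unfolding prune_def using r'T initseg_trans[OF _ r'r] by blast
  qed
qed

lemma alpha_tree_prune:
  assumes T: "alpha_tree U a T" and P_stem: "P (stem T)"
    and P_successors: "\<And>t. t \<in> T \<Longrightarrow> stem T \<sqsubseteq> t \<Longrightarrow> P t \<Longrightarrow> \<forall>\<^sub>F i in alpha_filter. P (insert (a t i) t)"
  shows "alpha_tree U a (prune T P)" "stem (prune T P) = stem T"
proof -
  note stem_mem = alpha_tree_stem(1)[OF T]
  have "stem T \<in> prune T P"
    using stem_mem initseg_refl[OF is_tree_finite[OF alpha_tree_is_tree[OF T] stem_mem]]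
    unfolding prune_def by blast
  moreover have "stem T \<sqsubseteq> r \<or> r \<sqsubseteq> stem T" if "r \<in> prune T P" for r
    using that unfolding prune_def by blast
  moreover have "\<forall>\<^sub>F i in alpha_filter. insert (a r i) r \<in> prune T P"
    if r: "r \<in> prune T P" "stem T \<sqsubseteq> r" for r
  proof -
    have rT: "r \<in> T" and fr: "finite r"
      using r prune_subset is_tree_finite[OF alpha_tree_is_tree[OF T]] by blast+
    have P_r: "\<forall>q. stem T \<sqsubseteq> q \<longrightarrow> q \<sqsubseteq> r \<longrightarrow> P q"
      using prune_above[OF P_stem r(1)] by blast
    have "\<forall>\<^sub>F i in alpha_filter. (insert (a r i) r \<in> T \<and> P (insert (a r i) r)) \<and> appendable r (a r i)"
      using alpha_tree_successors[OF T rT r(2)] P_successors[OF rT r(2)] P_r r(2) initseg_refl[OF fr]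
        eventually_appendable[OF fr]
      by (intro eventually_conj) auto
    then show ?thesis
    proof (rule eventually_mono)
      fix i assume i: "(insert (a r i) r \<in> T \<and> P (insert (a r i) r)) \<and> appendable r (a r i)"
      have "\<forall>q. stem T \<sqsubseteq> q \<longrightarrow> q \<sqsubseteq> insert (a r i) r \<longrightarrow> P q"
        using P_r i initseg_insertE[OF _ fr] by blast
      moreover have "stem T \<sqsubseteq> insert (a r i) r"
        using initseg_trans[OF r(2) initseg_insert[OF fr]] i by blast
      ultimately show "insert (a r i) r \<in> prune T P"
        using i unfolding prune_def by blast
    qed
  qed
  ultimately show "alpha_tree U a (prune T P)" "stem (prune T P) = stem T"
    using alpha_treeI[OF is_tree_prune[OF alpha_tree_is_tree[OF T] stem_mem]] by blast+
qed

lemma openin_subtree_at_node: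
  assumes G: "openin ellentuck G" and T: "alpha_tree U a T" and X: "X \<in> body T" "X \<in> G"
  obtains u R where "u \<sqsubseteq> X" "stem T \<sqsubseteq> u"
    "alpha_tree U a R" "R \<subseteq> T" "stem R = u" "body R \<subseteq> G"
proof -
  obtain R where R: "alpha_tree U a R" "X \<in> body R" "body R \<subseteq> G"
    using openin_ellentuck_basis[OF G X(2)] .
  obtain u where u: "u \<sqsubseteq> X" "stem R \<sqsubseteq> u" "stem T \<sqsubseteq> u"
    using initseg_common_extension[OF stem_initseg_body[OF R(1,2)] stem_initseg_body[OF T X(1)]] .
  have "u \<in> R" "u \<in> T"
    using X(1) R(2) u(1) unfolding mem_body by blast+
  note restricted = alpha_tree_Int_through[OF R(1) T this u(2,3)]
  have "through (R \<inter> T) u \<subseteq> R \<inter> T" by (rule through_subset)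
  moreover have "body (through (R \<inter> T) u) \<subseteq> G"
    using body_mono[of "through (R \<inter> T) u" R] R(3) calculation by blast
  ultimately show thesis
    using that[OF u(1,3) restricted(1) _ restricted(2)] by blast
qed

lemma openin_alpha_Ramsey:
  assumes G: "openin ellentuck G"
  shows "alpha_Ramsey U a G"
  unfolding alpha_Ramsey_def
proof (intro allI impI)
  fix T assume T: "alpha_tree U a T"
  define good where "good = (\<lambda>u. \<exists>R. alpha_tree U a R \<and> R \<subseteq> T \<and> stem R = u \<and> body R \<subseteq> G)"
  show "\<exists>S. alpha_tree U a S \<and> S \<subseteq> T \<and> stem S = stem T \<and> (body S \<subseteq> G \<or> body S \<inter> G = {})"
  proof (cases "good (stem T)")
    case True
    then show ?thesis unfolding good_def by blast
  next
    case False
    have bad_successors: "\<forall>\<^sub>F i in alpha_filter. \<not> good (insert (a t i) t)"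
      if "t \<in> T" "\<not> good t" for t
    proof (rule ccontr)
      assume "\<not> (\<forall>\<^sub>F i in alpha_filter. \<not> good (insert (a t i) t))"
      then have "\<forall>\<^sub>F i in alpha_filter. good (insert (a t i) t)"
        using eventually_alpha_filter_not by fastforce
      then have "good t"
        unfolding good_def
        by (rule alpha_tree_amalgamation[OF is_tree_finite[OF alpha_tree_is_tree[OF T] that(1)]])
      then show False using that(2) by blast
    qed
    define B where "B = prune T (\<lambda>u. \<not> good u)"
    have B: "alpha_tree U a B" "stem B = stem T" "B \<subseteq> T"
      using alpha_tree_prune[OF T, of "\<lambda>u. \<not> good u"] False bad_successors prune_subset
      unfolding B_def by blast+
    have "body B \<inter> G = {}"
    proof (rule ccontr)
      assume "body B \<inter> G \<noteq> {}"
      then obtain X where XB: "X \<in> body B" and XG: "X \<in> G" by blast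
      have "X \<in> body T" using body_mono[OF B(3)] XB by blast
      then obtain u R where u: "u \<sqsubseteq> X" "stem T \<sqsubseteq> u"
        and R: "alpha_tree U a R" "R \<subseteq> T" "stem R = u" "body R \<subseteq> G"
        using openin_subtree_at_node[OF G T _ XG] by blast
      have "good u" unfolding good_def using R by blast
      moreover have "u \<in> prune T (\<lambda>u. \<not> good u)"
        using XB u(1) unfolding body_def B_def by blast
      then have "\<not> good u"
        using prune_above[where P = "\<lambda>u. \<not> good u", OF False _ u(2) initseg_refl[OF initseg_finite[OF u(1)]]]
        by blast
      ultimately show False by blast
    qed
    then show ?thesis using B by blast
  qed
qed

section \<open>Null sets and meager sets\<close>

lemma alpha_Ramsey_null_subset:
  "alpha_Ramsey_null U a \<M> \<Longrightarrow> \<N> \<subseteq> \<M> \<Longrightarrow> alpha_Ramsey_null U a \<N>"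
  unfolding alpha_Ramsey_null_def by blast

lemma nowhere_dense_alpha_Ramsey_null:
  assumes N: "nowhere_dense_in ellentuck \<N>"
  shows "alpha_Ramsey_null U a \<N>"
  unfolding alpha_Ramsey_null_def
proof (intro allI impI)
  fix T assume T: "alpha_tree U a T"
  define G where "G = topspace ellentuck - ellentuck closure_of \<N>"
  have "openin ellentuck G"
    unfolding G_def by (intro openin_diff openin_topspace closedin_closure_of)
  then obtain S where S: "alpha_tree U a S" "S \<subseteq> T" "stem S = stem T" "body S \<subseteq> G \<or> body S \<inter> G = {}"
    using openin_alpha_Ramsey T unfolding alpha_Ramsey_def by blast
  have "body S \<subseteq> G"
  proof (rule ccontr)
    assume "\<not> body S \<subseteq> G"
    then have "body S \<subseteq> ellentuck closure_of \<N>"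
      using S(4) openin_subset[OF openin_body[OF S(1)]] unfolding G_def by blast
    then have "body S \<subseteq> ellentuck interior_of (ellentuck closure_of \<N>)"
      using interior_of_maximal[OF _ openin_body[OF S(1)]] by blast
    then show False
      using N body_nonempty[OF S(1)] unfolding nowhere_dense_in_def by blast
  qed
  moreover have "\<N> \<subseteq> ellentuck closure_of \<N>"
    using N closure_of_subset unfolding nowhere_dense_in_def by blast
  ultimately have "body S \<inter> \<N> = {}"
    unfolding G_def by blast
  then show "\<exists>S. alpha_tree U a S \<and> S \<subseteq> T \<and> stem S = stem T \<and> body S \<inter> \<N> = {}"
    using S by blast
qed

text \<open>The bound k \<le> card q leaves only finitely many constraints at each node, which is what
  keeps the fusion of the trees R q k an \<alpha>-tree.\<close>
definition in_fusion_trees :: "nat set \<Rightarrow> (nat set \<Rightarrow> nat \<Rightarrow> nat set set) \<Rightarrow> nat set \<Rightarrow> bool" where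
  "in_fusion_trees s R r \<longleftrightarrow> (\<forall>q k. s \<sqsubseteq> q \<longrightarrow> q \<sqsubseteq> r \<longrightarrow> q \<noteq> r \<longrightarrow> k \<le> card q \<longrightarrow> r \<in> R q k)"

lemma eventually_in_fusion_trees:
  assumes T: "alpha_tree U a T" and t: "t \<in> T" "stem T \<sqsubseteq> t"
    and R: "\<And>q k. q \<in> T \<Longrightarrow> stem T \<sqsubseteq> q \<Longrightarrow> alpha_tree U a (R q k) \<and> stem (R q k) = q"
    and fused: "in_fusion_trees (stem T) R t"
  shows "\<forall>\<^sub>F i in alpha_filter. in_fusion_trees (stem T) R (insert (a t i) t)"
proof -
  have ft: "finite t" using is_tree_finite[OF alpha_tree_is_tree[OF T] t(1)] .
  define F where "F = Pow t \<times> {..card t}"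
  have "\<forall>\<^sub>F i in alpha_filter. stem T \<sqsubseteq> q \<and> q \<sqsubseteq> t \<and> k \<le> card q \<longrightarrow> insert (a t i) t \<in> R q k"
    for q k
  proof (cases "stem T \<sqsubseteq> q \<and> q \<sqsubseteq> t \<and> k \<le> card q")
    case True
    then have "q \<in> T" using is_tree_initseg_closed[OF alpha_tree_is_tree[OF T] t(1)] by blast
    then have Rqk: "alpha_tree U a (R q k)" "stem (R q k) = q" using R True by blast+
    have "t \<in> R q k"
    proof (cases "q = t")
      case True
      then show ?thesis using alpha_tree_stem(1)[OF Rqk(1)] Rqk(2) by simp
    qed (use fused \<open>stem T \<sqsubseteq> q \<and> q \<sqsubseteq> t \<and> k \<le> card q\<close> in \<open>auto simp: in_fusion_trees_def\<close>)
    moreover have "stem (R q k) \<sqsubseteq> t" using Rqk(2) True by simp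
    ultimately have "\<forall>\<^sub>F i in alpha_filter. insert (a t i) t \<in> R q k"
      by (rule alpha_tree_successors[OF Rqk(1)])
    then show ?thesis by (rule eventually_mono) blast
  qed (intro always_eventually, blast)
  then have "\<forall>\<^sub>F i in alpha_filter. (\<forall>(q, k)\<in>F. stem T \<sqsubseteq> q \<and> q \<sqsubseteq> t \<and> k \<le> card q \<longrightarrow> insert (a t i) t \<in> R q k)
      \<and> appendable t (a t i)"
    using eventually_appendable[OF ft] unfolding F_def
    by (intro eventually_conj eventually_ball_finite) (auto simp: ft)
  then show ?thesis
  proof (rule eventually_mono)
    fix i
    assume i: "(\<forall>(q, k)\<in>F. stem T \<sqsubseteq> q \<and> q \<sqsubseteq> t \<and> k \<le> card q \<longrightarrow> insert (a t i) t \<in> R q k)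
      \<and> appendable t (a t i)"
    show "in_fusion_trees (stem T) R (insert (a t i) t)"
      unfolding in_fusion_trees_def
    proof (intro allI impI)
      fix q k assume q: "stem T \<sqsubseteq> q" "q \<sqsubseteq> insert (a t i) t" "q \<noteq> insert (a t i) t" "k \<le> card q"
      then have "q \<sqsubseteq> t" using initseg_insertE[OF q(2) ft] i by blast
      moreover have "card q \<le> card t" using card_mono[OF ft initseg_subset[OF \<open>q \<sqsubseteq> t\<close>]] .
      ultimately have "(q, k) \<in> F" unfolding F_def using initseg_subset q(4) by auto
      then show "insert (a t i) t \<in> R q k" using i q(1,4) \<open>q \<sqsubseteq> t\<close> by blast
    qed
  qed
qed

lemma in_fusion_trees_self: "in_fusion_trees s R s"
  unfolding in_fusion_trees_def using initseg_antisym by blast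

lemma body_fusion_subset:
  assumes R: "alpha_tree U a (R q k)" "stem (R q k) = q"
    and X: "X \<in> body (prune T (in_fusion_trees (stem T) R))"
    and q: "q \<sqsubseteq> X" "stem T \<sqsubseteq> q" "k \<le> card q"
  shows "X \<in> body (R q k)"
proof -
  have "r \<in> R q k" if r: "r \<sqsubseteq> X" for r
  proof (cases "r \<sqsubseteq> q")
    case True
    moreover have "q \<in> R q k"
      using alpha_tree_stem(1)[OF R(1)] R(2) by simp
    ultimately show ?thesis
      using is_tree_initseg_closed[OF alpha_tree_is_tree[OF R(1)]] by blast
  next
    case False
    then have "q \<sqsubseteq> r" "q \<noteq> r"
      using initseg_comparable[OF r q(1)] initseg_refl[OF initseg_finite[OF r]] by blast+
    moreover have "r \<in> prune T (in_fusion_trees (stem T) R)"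
      using X r unfolding body_def by blast
    then have "in_fusion_trees (stem T) R r"
      using prune_above[where P = "in_fusion_trees (stem T) R", OF in_fusion_trees_self _
          initseg_trans[OF q(2) \<open>q \<sqsubseteq> r\<close>] initseg_refl[OF initseg_finite[OF r]]] by blast
    ultimately show ?thesis
      using q(2,3) unfolding in_fusion_trees_def by blast
  qed
  then show ?thesis using X unfolding mem_body by blast
qed

lemma alpha_Ramsey_null_UN:
  fixes \<M> :: "nat \<Rightarrow> nat set set"
  assumes null: "\<And>n. alpha_Ramsey_null U a (\<M> n)"
  shows "alpha_Ramsey_null U a (\<Union>n. \<M> n)"
  unfolding alpha_Ramsey_null_def
proof (intro allI impI)
  fix T assume T: "alpha_tree U a T"
  define R where "R = (\<lambda>u k. SOME R. alpha_tree U a R \<and> R \<subseteq> T \<and> stem R = u \<and> body R \<inter> \<M> k = {})"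
  have R: "alpha_tree U a (R u k) \<and> R u k \<subseteq> T \<and> stem (R u k) = u \<and> body (R u k) \<inter> \<M> k = {}"
    if u: "u \<in> T" "stem T \<sqsubseteq> u" for u k
  proof -
    have "alpha_tree U a (through T u)" "stem (through T u) = u"
      using alpha_tree_Int_through[OF T T u(1) u(1) u(2) u(2)] by simp_all
    then obtain R' where "alpha_tree U a R'" "R' \<subseteq> through T u" "stem R' = u" "body R' \<inter> \<M> k = {}"
      using null[of k] unfolding alpha_Ramsey_null_def by metis
    then have "\<exists>R. alpha_tree U a R \<and> R \<subseteq> T \<and> stem R = u \<and> body R \<inter> \<M> k = {}"
      using through_subset by blast
    then show ?thesis unfolding R_def by (rule someI_ex)
  qed
  have R_stem: "alpha_tree U a (R u k) \<and> stem (R u k) = u" if "u \<in> T" "stem T \<sqsubseteq> u" for u k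
    using R[OF that] by blast
  define S where "S = prune T (in_fusion_trees (stem T) R)"
  have "\<forall>\<^sub>F i in alpha_filter. in_fusion_trees (stem T) R (insert (a t i) t)"
    if "t \<in> T" "stem T \<sqsubseteq> t" "in_fusion_trees (stem T) R t" for t
    using eventually_in_fusion_trees[OF T that(1,2) R_stem that(3)] .
  note pruned = alpha_tree_prune[where P = "in_fusion_trees (stem T) R", OF T in_fusion_trees_self this]
  have S: "alpha_tree U a S" "stem S = stem T" "S \<subseteq> T"
    using pruned prune_subset unfolding S_def by blast+
  have "body S \<inter> \<M> n = {}" for n
  proof (rule ccontr)
    assume "body S \<inter> \<M> n \<noteq> {}"
    then obtain X where XS: "X \<in> body S" and XM: "X \<in> \<M> n" by blast
    have "infinite X" using XS unfolding mem_body by blast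
    then obtain q where q: "q \<sqsubseteq> X" "stem T \<sqsubseteq> q" "n \<le> card q"
      using initseg_of_large_card stem_initseg_body[OF S(1) XS] S(2) by metis
    have "q \<in> T" using XS q(1) S(3) unfolding mem_body by blast
    then have "X \<in> body (R q n)"
      using body_fusion_subset[of R q n X T] R q XS unfolding S_def by blast
    then show False using R[OF \<open>q \<in> T\<close> q(2)] XM by blast
  qed
  then show "\<exists>S. alpha_tree U a S \<and> S \<subseteq> T \<and> stem S = stem T \<and> body S \<inter> (\<Union>n. \<M> n) = {}"
    using S by blast
qed

lemma meager_alpha_Ramsey_null:
  assumes "meager_in ellentuck \<M>"
  shows "alpha_Ramsey_null U a \<M>"
proof -
  obtain N :: "nat \<Rightarrow> nat set set" where N: "\<And>n. nowhere_dense_in ellentuck (N n)" "\<M> \<subseteq> (\<Union>n. N n)"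
    using assms unfolding meager_in_def by blast
  then have "alpha_Ramsey_null U a (\<Union>n. N n)"
    using alpha_Ramsey_null_UN nowhere_dense_alpha_Ramsey_null by blast
  then show ?thesis using N(2) by (rule alpha_Ramsey_null_subset)
qed

lemma alpha_Ramsey_null_nowhere_dense:
  assumes null: "alpha_Ramsey_null U a \<M>" and \<M>: "\<M> \<subseteq> topspace ellentuck"
  shows "nowhere_dense_in ellentuck \<M>"
proof -
  have "ellentuck interior_of (ellentuck closure_of \<M>) = {}"
  proof (rule ccontr)
    assume "ellentuck interior_of (ellentuck closure_of \<M>) \<noteq> {}"
    then obtain Y where "Y \<in> ellentuck interior_of (ellentuck closure_of \<M>)" by blast
    then obtain T where T: "alpha_tree U a T" "body T \<subseteq> ellentuck interior_of (ellentuck closure_of \<M>)"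
      using openin_ellentuck_basis[OF openin_interior_of] by metis
    obtain S where S: "alpha_tree U a S" "S \<subseteq> T" "body S \<inter> \<M> = {}"
      using null T(1) unfolding alpha_Ramsey_null_def by blast
    have "body S \<inter> ellentuck closure_of \<M> = {}"
      using openin_Int_closure_of_eq_empty[OF openin_body[OF S(1)]] S(3) by simp
    moreover have "body S \<subseteq> ellentuck closure_of \<M>"
      using body_mono[OF S(2)] T(2) interior_of_subset[of ellentuck "ellentuck closure_of \<M>"] by blast
    ultimately show False
      using body_nonempty[OF S(1)] by blast
  qed
  then show ?thesis unfolding nowhere_dense_in_def using \<M> by blast
qed

lemma alpha_Ramsey_null_iff_meager:
  assumes "\<M> \<subseteq> topspace ellentuck"
  shows "alpha_Ramsey_null U a \<M> \<longleftrightarrow> meager_in ellentuck \<M>"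
proof
  assume "alpha_Ramsey_null U a \<M>"
  then have "nowhere_dense_in ellentuck \<M>"
    using alpha_Ramsey_null_nowhere_dense assms by blast
  then show "meager_in ellentuck \<M>"
    unfolding meager_in_def using assms by (intro conjI exI[of _ "\<lambda>n. \<M>"]) auto
qed (rule meager_alpha_Ramsey_null)

lemma alpha_Ramsey_iff_Baire_property:
  assumes \<X>: "\<X> \<subseteq> topspace ellentuck"
  shows "alpha_Ramsey U a \<X> \<longleftrightarrow> Baire_property_in ellentuck \<X>"
proof
  assume Ramsey: "alpha_Ramsey U a \<X>"
  define G where "G = \<Union>{body S | S. alpha_tree U a S \<and> body S \<subseteq> \<X>}"
  have G: "openin ellentuck G"
    unfolding G_def by (rule openin_Union) (auto intro: openin_body)
  have "alpha_Ramsey_null U a ((\<X> - G) \<union> (G - \<X>))"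
    unfolding alpha_Ramsey_null_def
  proof (intro allI impI)
    fix T assume "alpha_tree U a T"
    then obtain S where S: "alpha_tree U a S" "S \<subseteq> T" "stem S = stem T" "body S \<subseteq> \<X> \<or> body S \<inter> \<X> = {}"
      using Ramsey unfolding alpha_Ramsey_def by blast
    have "body S \<subseteq> G" if "body S \<subseteq> \<X>"
      using that S(1) unfolding G_def by blast
    moreover have "body S \<inter> G = {}" if "body S \<inter> \<X> = {}"
      using that unfolding G_def by blast
    ultimately have "body S \<inter> ((\<X> - G) \<union> (G - \<X>)) = {}"
      using S(4) by blast
    then show "\<exists>S. alpha_tree U a S \<and> S \<subseteq> T \<and> stem S = stem T \<and> body S \<inter> ((\<X> - G) \<union> (G - \<X>)) = {}"
      using S by blast
  qed
  moreover have "(\<X> - G) \<union> (G - \<X>) \<subseteq> topspace ellentuck"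
    using \<X> openin_subset[OF G] by blast
  ultimately show "Baire_property_in ellentuck \<X>"
    unfolding Baire_property_in_def using alpha_Ramsey_null_iff_meager \<X> G by blast
next
  assume "Baire_property_in ellentuck \<X>"
  then obtain G where G: "openin ellentuck G" "meager_in ellentuck ((\<X> - G) \<union> (G - \<X>))"
    unfolding Baire_property_in_def by blast
  show "alpha_Ramsey U a \<X>"
    unfolding alpha_Ramsey_def
  proof (intro allI impI)
    fix T assume "alpha_tree U a T"
    then obtain S1 where S1: "alpha_tree U a S1" "S1 \<subseteq> T" "stem S1 = stem T"
      "body S1 \<inter> ((\<X> - G) \<union> (G - \<X>)) = {}"
      using meager_alpha_Ramsey_null[OF G(2)] unfolding alpha_Ramsey_null_def by blast
    obtain S2 where S2: "alpha_tree U a S2" "S2 \<subseteq> S1" "stem S2 = stem S1" "body S2 \<subseteq> G \<or> body S2 \<inter> G = {}"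
      using openin_alpha_Ramsey[OF G(1)] S1(1) unfolding alpha_Ramsey_def by blast
    have "body S2 \<subseteq> \<X> \<or> body S2 \<inter> \<X> = {}"
      using S2(4) body_mono[OF S2(2)] S1(4) by blast
    then show "\<exists>S. alpha_tree U a S \<and> S \<subseteq> T \<and> stem S = stem T \<and> (body S \<subseteq> \<X> \<or> body S \<inter> \<X> = {})"
      using S1 S2 by (intro exI[of _ S2]) auto
  qed
qed

end

theorem mainTheorem5:
  fixes U :: "nat set set" and a :: "nat set \<Rightarrow> nat \<Rightarrow> nat"
  assumes "alpha_model U"
    and "\<And>s. finite s \<Longrightarrow> nonstandard_hypernat U (a s)"
  shows "\<forall>\<X>. \<X> \<subseteq> {X. infinite X} \<longrightarrow>
           (alpha_Ramsey U a \<X> \<longleftrightarrow> Baire_property_in (alpha_Ellentuck U a) \<X>) \<and>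
           (alpha_Ramsey_null U a \<X> \<longleftrightarrow> meager_in (alpha_Ellentuck U a) \<X>)"
proof -
  interpret alpha_sequence U a
    using assms by unfold_locales
  show ?thesis
    using alpha_Ramsey_iff_Baire_property alpha_Ramsey_null_iff_meager topspace_ellentuck by simp
qed

end
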